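(* Let $G$ be a finite simple graph with an initial configuration $c_0$ and let $u,v\in V(G)$ satisfy $N(u)=N(v)$ or $N[u]=N[v]$. Then for every integer $t\geq0$, $|c_t(u)-c_t(v)|\leq\max\{|c_0(u)-c_0(v)|,\ 2\deg(u)\}$.
   Context: Diffusion process: for a configuration $c_t:V(G)\to\mathbb{Z}$, $c_{t+1}(w)=c_t(w)-|\{x\in N(w): c_t(w)>c_t(x)\}|+|\{x\in N(w): c_t(w)<c_t(x)\}|$ for all $w$ simultaneously. $N(u)$ is the open neighbourhood and $N[u]=N(u)\cup\{u\}$ the closed neighbourhood. *)

theory Defs
  imports Main
begin

definition simple_graph :: "'a set \<Rightarrow> ('a \<Rightarrow> 'a \<Rightarrow> bool) \<Rightarrow> bool" where
  "simple_graph V E \<longleftrightarrow> finite V \<and> (\<forall>x y. E x y \<longrightarrow> x \<in> V \<and> y \<in> V)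
     \<and> (\<forall>x y. E x y \<longrightarrow> E y x) \<and> (\<forall>x. \<not> E x x)"

definition nbhd :: "'a set \<Rightarrow> ('a \<Rightarrow> 'a \<Rightarrow> bool) \<Rightarrow> 'a \<Rightarrow> 'a set" where
  "nbhd V E u = {x \<in> V. E u x}"

definition closed_nbhd :: "'a set \<Rightarrow> ('a \<Rightarrow> 'a \<Rightarrow> bool) \<Rightarrow> 'a \<Rightarrow> 'a set" where
  "closed_nbhd V E u = insert u (nbhd V E u)"

definition degree :: "'a set \<Rightarrow> ('a \<Rightarrow> 'a \<Rightarrow> bool) \<Rightarrow> 'a \<Rightarrow> nat" where
  "degree V E u = card (nbhd V E u)"

definition diffusion_step ::
  "'a set \<Rightarrow> ('a \<Rightarrow> 'a \<Rightarrow> bool) \<Rightarrow> ('a \<Rightarrow> int) \<Rightarrow> ('a \<Rightarrow> int)" where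
  "diffusion_step V E c = (\<lambda>w. c w
      - int (card {x \<in> nbhd V E w. c w > c x})
      + int (card {x \<in> nbhd V E w. c w < c x}))"

definition diffusion :: "'a set \<Rightarrow> ('a \<Rightarrow> 'a \<Rightarrow> bool) \<Rightarrow> ('a \<Rightarrow> int) \<Rightarrow> nat \<Rightarrow> ('a \<Rightarrow> int)" where
  "diffusion V E c0 t = (diffusion_step V E ^^ t) c0"

end

theory Submission
  imports Defs
begin

text \<open>Each vertex moves by one unit towards every neighbour, i.e. by the sum of the signs
  of the differences. For twins u, v with c(u) \<ge> c(v), every common neighbour x
  contributes sgn(c x - c u) - sgn(c x - c v) \<in> [-2, 0] to the change of c(u) - c(v); for
  adjacent twins the edge uv contributes sgn(c v - c u) - sgn(c u - c v) \<in> [-2, 0] as well.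
  Hence one step maps the gap d = c(u) - c(v) \<ge> 0 into [d - 2 deg u, d], whose absolute
  values are bounded by max d (2 deg u), and the bound propagates by induction.\<close>

definition twins :: "'a set \<Rightarrow> ('a \<Rightarrow> 'a \<Rightarrow> bool) \<Rightarrow> 'a \<Rightarrow> 'a \<Rightarrow> bool" where
  "twins V E u v \<longleftrightarrow> nbhd V E u = nbhd V E v \<or> closed_nbhd V E u = closed_nbhd V E v"

lemma twins_sym: "twins V E u v \<Longrightarrow> twins V E v u"
  unfolding twins_def by auto

lemma finite_nbhd: "finite V \<Longrightarrow> finite (nbhd V E w)"
  by (simp add: nbhd_def)

lemma not_in_nbhd_self: "simple_graph V E \<Longrightarrow> w \<notin> nbhd V E w"
  by (simp add: simple_graph_def nbhd_def)

lemma mem_nbhd_sym: "simple_graph V E \<Longrightarrow> x \<in> nbhd V E w \<Longrightarrow> w \<in> nbhd V E x"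
  by (auto simp: simple_graph_def nbhd_def)

lemma twins_degree_eq:
  assumes "simple_graph V E" "twins V E u v"
  shows "degree V E u = degree V E v"
proof (cases "nbhd V E u = nbhd V E v")
  case False
  with assms(2) have "card (closed_nbhd V E u) = card (closed_nbhd V E v)"
    by (simp add: twins_def)
  moreover have "finite V" using assms(1) by (simp add: simple_graph_def)
  ultimately show ?thesis
    using not_in_nbhd_self[OF assms(1)] by (simp add: degree_def closed_nbhd_def finite_nbhd)
qed (simp add: degree_def)

lemma diffusion_step_eq_sum_sgn:
  assumes "finite V"
  shows "diffusion_step V E c w = c w + (\<Sum>x\<in>nbhd V E w. sgn (c x - c w))"
proof -
  have "(\<Sum>x\<in>nbhd V E w. sgn (c x - c w))
      = (\<Sum>x\<in>nbhd V E w. of_bool (c w < c x) - of_bool (c w > c x))"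
    by (rule sum.cong) (auto simp: sgn_if)
  also have "\<dots> = int (card {x \<in> nbhd V E w. c w < c x}) - int (card {x \<in> nbhd V E w. c w > c x})"
    using finite_nbhd[OF assms] by (simp add: sum_subtractf sum.If_cases Int_def)
  finally show ?thesis unfolding diffusion_step_def by simp
qed

lemma sum_sgn_diff_bounds:
  fixes f :: "'a \<Rightarrow> int" and a b :: int
  assumes "finite M" "b \<le> a"
  shows "- 2 * int (card M) \<le> (\<Sum>x\<in>M. sgn (f x - a) - sgn (f x - b))"
    and "(\<Sum>x\<in>M. sgn (f x - a) - sgn (f x - b)) \<le> 0"
proof -
  have term_bounds: "- 2 \<le> sgn (f x - a) - sgn (f x - b) \<and> sgn (f x - a) - sgn (f x - b) \<le> 0" for x
    using assms(2) by (auto simp: sgn_if)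
  have "(\<Sum>x\<in>M. - 2) \<le> (\<Sum>x\<in>M. sgn (f x - a) - sgn (f x - b))"
    using term_bounds by (intro sum_mono) blast
  then show "- 2 * int (card M) \<le> (\<Sum>x\<in>M. sgn (f x - a) - sgn (f x - b))"
    by simp
  show "(\<Sum>x\<in>M. sgn (f x - a) - sgn (f x - b)) \<le> 0"
    using term_bounds by (intro sum_nonpos) blast
qed

lemma twins_step_diff_bounds:
  assumes g: "simple_graph V E" and tw: "twins V E u v" and le: "c v \<le> c u"
  shows "c u - c v - 2 * int (degree V E u) \<le> diffusion_step V E c u - diffusion_step V E c v"
    and "diffusion_step V E c u - diffusion_step V E c v \<le> c u - c v"
proof -
  have finV: "finite V" using g by (simp add: simple_graph_def)
  let ?D = "\<lambda>M. \<Sum>x\<in>M. sgn (c x - c u) - sgn (c x - c v)"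
  obtain T where step_diff: "diffusion_step V E c u - diffusion_step V E c v = c u - c v + T"
    and "- 2 * int (degree V E u) \<le> T" and "T \<le> 0"
  proof (cases "nbhd V E u = nbhd V E v")
    case True
    have "diffusion_step V E c u - diffusion_step V E c v = c u - c v + ?D (nbhd V E u)"
      using True by (simp add: diffusion_step_eq_sum_sgn[OF finV] sum_subtractf)
    then show thesis
      using that sum_sgn_diff_bounds[OF finite_nbhd[OF finV] le] by (simp add: degree_def)
  next
    case False
    with tw have closed: "closed_nbhd V E u = closed_nbhd V E v" by (simp add: twins_def)
    define M where "M = nbhd V E u - {v}"
    have "u \<noteq> v" using False by blast
    then have "v \<in> nbhd V E u"
      using closed mem_nbhd_sym[OF g, of u v] by (auto simp: closed_nbhd_def)
    then have Nu: "nbhd V E u = insert v M" and Nv: "nbhd V E v = insert u M"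
      and "u \<notin> M" "v \<notin> M"
      using closed \<open>u \<noteq> v\<close> not_in_nbhd_self[OF g] by (auto simp: M_def closed_nbhd_def)
    moreover have "finite M" using finite_nbhd[OF finV] by (simp add: M_def)
    ultimately have
      "diffusion_step V E c u - diffusion_step V E c v
         = c u - c v + (?D M + (sgn (c v - c u) - sgn (c u - c v)))"
      by (simp add: diffusion_step_eq_sum_sgn[OF finV] sum_subtractf)
    moreover have "- 2 \<le> sgn (c v - c u) - sgn (c u - c v)" "sgn (c v - c u) - sgn (c u - c v) \<le> 0"
      using le by (auto simp: sgn_if)
    moreover have "degree V E u = Suc (card M)"
      using Nu \<open>finite M\<close> \<open>v \<notin> M\<close> by (simp add: degree_def)
    ultimately show thesis
      using that sum_sgn_diff_bounds[OF \<open>finite M\<close> le, of c] by simp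
  qed
  then show "c u - c v - 2 * int (degree V E u) \<le> diffusion_step V E c u - diffusion_step V E c v"
    and "diffusion_step V E c u - diffusion_step V E c v \<le> c u - c v"
    by simp_all
qed

lemma abs_le_max_if_within_below:
  fixes d d' k :: int
  assumes "0 \<le> d" "d - k \<le> d'" "d' \<le> d"
  shows "\<bar>d'\<bar> \<le> max \<bar>d\<bar> k"
  using assms by linarith

lemma twins_step_abs_diff_le:
  assumes g: "simple_graph V E" and tw: "twins V E u v"
  shows "\<bar>diffusion_step V E c u - diffusion_step V E c v\<bar>
           \<le> max \<bar>c u - c v\<bar> (2 * int (degree V E u))"
proof (cases "c v \<le> c u")
  case True
  then show ?thesis
    using twins_step_diff_bounds[OF g tw True] by (intro abs_le_max_if_within_below) simp_all
next
  case False
  then have "\<bar>diffusion_step V E c v - diffusion_step V E c u\<bar>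
               \<le> max \<bar>c v - c u\<bar> (2 * int (degree V E v))"
    using twins_step_diff_bounds[OF g twins_sym[OF tw], of c]
    by (intro abs_le_max_if_within_below) simp_all
  then show ?thesis
    using twins_degree_eq[OF g tw] by (simp add: abs_minus_commute)
qed

theorem lemma10:
  fixes V :: "'a set" and E :: "'a \<Rightarrow> 'a \<Rightarrow> bool" and c0 :: "'a \<Rightarrow> int"
    and u v :: 'a and t :: nat
  assumes "simple_graph V E"
    and "u \<in> V" and "v \<in> V"
    and "nbhd V E u = nbhd V E v \<or> closed_nbhd V E u = closed_nbhd V E v"
  shows "\<bar>diffusion V E c0 t u - diffusion V E c0 t v\<bar>
           \<le> max \<bar>c0 u - c0 v\<bar> (2 * int (degree V E u))"
proof (induction t)
  case 0
  then show ?case by (simp add: diffusion_def)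
next
  case (Suc t)
  have "twins V E u v" using assms(4) by (simp add: twins_def)
  from twins_step_abs_diff_le[OF assms(1) this, of "diffusion V E c0 t"]
  have "\<bar>diffusion V E c0 (Suc t) u - diffusion V E c0 (Suc t) v\<bar>
          \<le> max \<bar>diffusion V E c0 t u - diffusion V E c0 t v\<bar> (2 * int (degree V E u))"
    by (simp add: diffusion_def)
  with Suc.IH show ?case by linarith
qed

end
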